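(* Let $\lambda$ be a nonzero real number. For every integer $n\ge0$, \[ \sum_{k=0}^{n}(-1)^{k}\,2^{-k-1}\,k!\,S_{2,\lambda}(n,k)=\frac{1}{n+1}\Big(\beta_{n+1,\lambda}-2^{n+1}\beta_{n+1,\frac{\lambda}{2}}\Big). \]
   Context: For nonzero real $\lambda$: $(x)_{0,\lambda}=1$, $(x)_{n,\lambda}=x(x-\lambda)\cdots(x-(n-1)\lambda)$ for $n\ge1$, and $(x)_k=x(x-1)\cdots(x-k+1)$. The degenerate Stirling numbers of the second kind $S_{2,\lambda}(n,k)$ are defined by $(x)_{n,\lambda}=\sum_{k=0}^{n}S_{2,\lambda}(n,k)(x)_{k}$. The degenerate Bernoulli numbers $\beta_{n,\mu}$ (for nonzero real $\mu$) are defined by $\frac{t}{e_{\mu}(t)-1}=\sum_{n=0}^{\infty}\beta_{n,\mu}\frac{t^{n}}{n!}$ with $e_\mu(t)=(1+\mu t)^{1/\mu}$; here $\mu=\lambda$ or $\mu=\lambda/2$. *)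

theory Defs
  imports Complex_Main "HOL-Computational_Algebra.Formal_Power_Series"
begin

definition dfall :: "real \<Rightarrow> nat \<Rightarrow> real \<Rightarrow> real" where
  "dfall lam n x = (\<Prod>i<n. x - real i * lam)"

definition ffall :: "nat \<Rightarrow> real \<Rightarrow> real" where
  "ffall k x = (\<Prod>i<k. x - real i)"

definition S2lam :: "real \<Rightarrow> nat \<Rightarrow> nat \<Rightarrow> real" where
  "S2lam lam n = (THE c. (\<forall>k>n. c k = 0) \<and>
      (\<forall>x. dfall lam n x = (\<Sum>k\<le>n. c k * ffall k x)))"

text \<open>Degenerate exponential e_mu(t) = (1 + mu t)^(1/mu) as a formal power series.\<close>
definition e_fps :: "real \<Rightarrow> real fps" where
  "e_fps mu = fps_binomial (1 / mu) oo (fps_const mu * fps_X)"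

definition dbern :: "nat \<Rightarrow> real \<Rightarrow> real" where
  "dbern n mu = fact n * fps_nth (fps_X / (e_fps mu - 1)) n"

end

theory Submission
  imports Defs
begin

(* Write e = e_lam(t). The degenerate Stirling numbers have the exponential generating function
   (e - 1)^k / k! = sum_n S_{2,lam}(n,k) t^n / n!, because both sides satisfy the recurrence
   S(n+1,k) = S(n,k-1) + (k - n lam) S(n,k), which on the generating-function side comes from
   (1 + lam t) e' = e. Hence the left-hand side is n! [t^n] sum_k (-1)^k (e - 1)^k / 2^(k+1)
   = n! [t^n] 1/(e + 1). On the other side e_{lam/2}(2t) = e^2, so
   t/(e - 1) - 2t/(e_{lam/2}(2t) - 1) = t/(e - 1) - 2t/(e^2 - 1) = t/(e + 1),
   and comparing coefficients of t^(n+1) gives the identity. *)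

unbundle fps_syntax

lemma fps_deriv_times_one_plus_X_nth:
  fixes f :: "'a :: comm_ring_1 fps"
  shows "(fps_deriv f * (1 + fps_const c * fps_X)) $ n
    = of_nat (Suc n) * f $ Suc n + c * (of_nat n * f $ n)"
  by (cases n) (simp_all add: algebra_simps)

lemma fps_inverse_const_plus_X_nth:
  fixes c :: "'a :: field"
  assumes "c \<noteq> 0"
  shows "inverse (fps_const c + fps_X) $ k = (- 1) ^ k / c ^ Suc k"
proof -
  have "(fps_const c + fps_X) * Abs_fps (\<lambda>k. (- 1) ^ k / c ^ Suc k) = 1"
  proof (rule fps_ext)
    fix k
    show "((fps_const c + fps_X) * Abs_fps (\<lambda>k. (- 1) ^ k / c ^ Suc k)) $ k = (1 :: 'a fps) $ k"
      using assms by (cases k) (simp_all add: field_simps)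
  qed
  then show ?thesis by (simp add: fps_inverse_unique)
qed

lemma fps_X_div_mult_cancel:
  fixes u :: "'a :: field fps"
  assumes "u $ 0 = 0" "u $ 1 \<noteq> 0"
  shows "fps_X / u * u = fps_X"
proof -
  have "u \<noteq> 0" using assms(2) by auto
  moreover have "subdegree u \<le> subdegree (fps_X :: 'a fps)"
    using assms(2) by (simp add: subdegree_leI)
  ultimately have "u dvd fps_X" by (simp add: fps_dvd_iff)
  then show ?thesis by simp
qed

lemma e_fps_nth: "e_fps mu $ n = mu ^ n * ((1 / mu) gchoose n)"
  by (simp add: e_fps_def)

lemma e_fps_deriv:
  assumes "lam \<noteq> 0"
  shows "fps_deriv (e_fps lam) * (1 + fps_const lam * fps_X) = e_fps lam"
proof (rule fps_ext)
  fix n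
  have "of_nat (Suc n) * ((1/lam) gchoose Suc n) = (1/lam - of_nat n) * ((1/lam) gchoose n)"
    using gbinomial_absorption[of n "1/lam"] gbinomial_absorb_comp[of "1/lam" n] by simp
  then have "of_nat (Suc n) * (lam ^ Suc n * ((1/lam) gchoose Suc n))
      = lam ^ n * lam * ((1/lam - of_nat n) * ((1/lam) gchoose n))"
    by (metis mult.left_commute power_Suc2)
  also have "\<dots> = (1 - lam * n) * (lam ^ n * ((1/lam) gchoose n))"
    using assms by (simp add: right_diff_distrib)
  finally show "(fps_deriv (e_fps lam) * (1 + fps_const lam * fps_X)) $ n = e_fps lam $ n"
    by (cases n) (auto simp: e_fps_nth algebra_simps)
qed

lemma e_fps_minus_1_power_deriv:
  assumes "lam \<noteq> 0"
  shows "fps_deriv ((e_fps lam - 1) ^ Suc k) * (1 + fps_const lam * fps_X)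
    = of_nat (Suc k) * ((e_fps lam - 1) ^ Suc k + (e_fps lam - 1) ^ k)"
proof -
  have "fps_deriv ((e_fps lam - 1) ^ Suc k) * (1 + fps_const lam * fps_X)
      = of_nat (Suc k) * (e_fps lam - 1) ^ k * (fps_deriv (e_fps lam) * (1 + fps_const lam * fps_X))"
    by (simp only: fps_deriv_power' fps_deriv_sub fps_deriv_1 diff_zero diff_Suc_1 ac_simps)
  also have "\<dots> = of_nat (Suc k) * (e_fps lam - 1) ^ k * e_fps lam"
    by (simp only: e_fps_deriv[OF assms])
  finally show ?thesis by (simp add: algebra_simps)
qed

lemma e_fps_half_compose_double:
  "e_fps (lam / 2) oo (fps_const 2 * fps_X) = e_fps lam ^ 2"
proof -
  have "e_fps lam ^ 2 = (fps_binomial (1 / lam) * fps_binomial (1 / lam)) oo (fps_const lam * fps_X)"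
    by (simp add: e_fps_def power2_eq_square fps_compose_mult_distrib)
  also have "\<dots> = fps_binomial (1 / (lam / 2)) oo (fps_const lam * fps_X)"
    by (simp add: fps_binomial_add_mult[symmetric])
  finally have square: "e_fps lam ^ 2 = fps_binomial (1 / (lam / 2)) oo (fps_const lam * fps_X)" .
  show ?thesis
    unfolding square by (intro fps_ext) (simp add: e_fps_def power_mult_distrib[symmetric])
qed

definition S2lam_gf :: "real \<Rightarrow> nat \<Rightarrow> nat \<Rightarrow> real" where
  "S2lam_gf lam n k = fact n / fact k * ((e_fps lam - 1) ^ k $ n)"

lemma S2lam_gf_eq_0: "n < k \<Longrightarrow> S2lam_gf lam n k = 0"
  by (simp add: S2lam_gf_def e_fps_nth startsby_zero_power_prefix)

lemma S2lam_gf_Suc: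
  assumes "lam \<noteq> 0"
  shows "S2lam_gf lam (Suc n) k
    = (if k = 0 then 0 else S2lam_gf lam n (k - 1)) + (real k - real n * lam) * S2lam_gf lam n k"
proof (cases k)
  case 0
  then show ?thesis by (cases n) (simp_all add: S2lam_gf_def)
next
  case (Suc j)
  define a where "a = (e_fps lam - 1) ^ Suc j"
  define b where "b = (e_fps lam - 1) ^ j"
  have deriv: "fps_deriv a * (1 + fps_const lam * fps_X) = fps_const (of_nat (Suc j)) * (a + b)"
    unfolding a_def b_def fps_of_nat by (rule e_fps_minus_1_power_deriv[OF assms])
  have "of_nat (Suc n) * a $ Suc n + lam * (of_nat n * a $ n) = of_nat (Suc j) * (a $ n + b $ n)"
    using arg_cong[OF deriv, of "\<lambda>f. f $ n"]
    by (simp only: fps_deriv_times_one_plus_X_nth fps_mult_left_const_nth fps_add_nth)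
  then have "of_nat (Suc n) * a $ Suc n = of_nat (Suc j) * (a $ n + b $ n) - lam * (of_nat n * a $ n)"
    by linarith
  then have "S2lam_gf lam (Suc n) (Suc j)
      = fact n / fact (Suc j) * (of_nat (Suc j) * (a $ n + b $ n) - lam * (of_nat n * a $ n))"
    by (simp add: S2lam_gf_def a_def)
  also have "\<dots> = fact n / fact j * b $ n + (real (Suc j) - real n * lam) * (fact n / fact (Suc j) * a $ n)"
    unfolding fact_Suc by (simp add: field_simps del: of_nat_Suc)
  finally show ?thesis by (simp add: Suc S2lam_gf_def a_def b_def)
qed

lemma dfall_eq_sum_S2lam_gf:
  assumes "lam \<noteq> 0"
  shows "dfall lam n x = (\<Sum>k\<le>n. S2lam_gf lam n k * ffall k x)"
proof (induction n)
  case 0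
  then show ?case by (simp add: dfall_def ffall_def S2lam_gf_def)
next
  case (Suc n)
  have "dfall lam (Suc n) x = (\<Sum>k\<le>n. S2lam_gf lam n k * ffall k x) * (x - real n * lam)"
    by (simp add: dfall_def Suc.IH[symmetric])
  also have "\<dots> = (\<Sum>k\<le>n. S2lam_gf lam n k * ffall (Suc k) x)
        + (\<Sum>k\<le>n. (real k - real n * lam) * S2lam_gf lam n k * ffall k x)"
    unfolding sum.distrib[symmetric] sum_distrib_right
    by (rule sum.cong) (simp_all add: ffall_def algebra_simps)
  also have "(\<Sum>k\<le>n. S2lam_gf lam n k * ffall (Suc k) x)
      = (\<Sum>k\<le>Suc n. (if k = 0 then 0 else S2lam_gf lam n (k - 1)) * ffall k x)"
    by (subst sum.atMost_Suc_shift) simp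
  also have "(\<Sum>k\<le>n. (real k - real n * lam) * S2lam_gf lam n k * ffall k x)
      = (\<Sum>k\<le>Suc n. (real k - real n * lam) * S2lam_gf lam n k * ffall k x)"
    by (simp add: S2lam_gf_eq_0)
  also have "(\<Sum>k\<le>Suc n. (if k = 0 then 0 else S2lam_gf lam n (k - 1)) * ffall k x)
        + (\<Sum>k\<le>Suc n. (real k - real n * lam) * S2lam_gf lam n k * ffall k x)
      = (\<Sum>k\<le>Suc n. S2lam_gf lam (Suc n) k * ffall k x)"
    by (simp only: S2lam_gf_Suc[OF assms] distrib_right sum.distrib)
  finally show ?case .
qed

lemma ffall_sum_eq_0_imp_coeff_eq_0:
  assumes "\<And>x. (\<Sum>k\<le>n. d k * ffall k x) = 0" "k \<le> n"
  shows "d k = 0"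
  using assms(2)
proof (induction k rule: less_induct)
  case (less k)
  have "0 = (\<Sum>i\<le>n. d i * ffall i (real k))"
    using assms(1) by simp
  also have "\<dots> = (\<Sum>i\<le>n. if i = k then d k * ffall k (real k) else 0)"
  proof (rule sum.cong)
    fix i
    show "d i * ffall i (real k) = (if i = k then d k * ffall k (real k) else 0)"
    proof (cases "i < k")
      case True
      then show ?thesis using less.IH less.prems by simp
    next
      case False
      then show ?thesis by (auto simp: ffall_def prod_zero_iff)
    qed
  qed simp
  also have "\<dots> = d k * ffall k (real k)"
    using less.prems by simp
  finally have "d k * ffall k (real k) = 0" ..
  moreover have "ffall k (real k) \<noteq> 0"
    by (auto simp: ffall_def prod_zero_iff)
  ultimately show ?case by simp
qed

lemma S2lam_eq_S2lam_gf:
  assumes "lam \<noteq> 0"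
  shows "S2lam lam n = S2lam_gf lam n"
  unfolding S2lam_def
proof (rule the_equality)
  show "(\<forall>k>n. S2lam_gf lam n k = 0) \<and> (\<forall>x. dfall lam n x = (\<Sum>k\<le>n. S2lam_gf lam n k * ffall k x))"
    using S2lam_gf_eq_0 dfall_eq_sum_S2lam_gf[OF assms] by auto
next
  fix c
  assume c: "(\<forall>k>n. c k = 0) \<and> (\<forall>x. dfall lam n x = (\<Sum>k\<le>n. c k * ffall k x))"
  have "c k = S2lam_gf lam n k" for k
  proof (cases "k \<le> n")
    case True
    have comb: "\<And>x. (\<Sum>k\<le>n. (c k - S2lam_gf lam n k) * ffall k x) = 0"
      using c dfall_eq_sum_S2lam_gf[OF assms] by (simp add: left_diff_distrib sum_subtractf)
    show ?thesis
      using ffall_sum_eq_0_imp_coeff_eq_0[where d = "\<lambda>k. c k - S2lam_gf lam n k", OF comb True] by simp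
  next
    case False
    then show ?thesis using c S2lam_gf_eq_0 by simp
  qed
  then show "c = S2lam_gf lam n" ..
qed

lemma sum_alternating_S2lam:
  assumes "lam \<noteq> 0"
  shows "(\<Sum>k\<le>n. (-1) ^ k / 2 ^ (k + 1) * fact k * S2lam lam n k)
    = fact n * inverse (e_fps lam + 1) $ n"
proof -
  define u where "u = e_fps lam - 1"
  have u0: "u $ 0 = 0" by (simp add: u_def e_fps_nth)
  have "(\<Sum>k\<le>n. (-1) ^ k / 2 ^ (k + 1) * fact k * S2lam lam n k)
      = fact n * (\<Sum>k\<le>n. inverse (fps_const 2 + fps_X) $ k * u ^ k $ n)"
    unfolding sum_distrib_left
    by (intro sum.cong) (simp_all add: S2lam_eq_S2lam_gf[OF assms] S2lam_gf_def
        fps_inverse_const_plus_X_nth u_def)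
  also have "\<dots> = fact n * (inverse (fps_const 2 + fps_X) oo u) $ n"
    by (simp add: fps_compose_nth atLeast0AtMost)
  also have "inverse (fps_const 2 + fps_X) oo u = inverse (fps_const 2 + u)"
    using u0 by (simp add: fps_inverse_compose fps_compose_add_distrib)
  also have "fps_const 2 + u = e_fps lam + 1"
    by (simp add: u_def fps_eq_iff)
  finally show ?thesis .
qed

lemma X_div_e_fps_minus_1_diff:
  assumes "lam \<noteq> 0"
  shows "fps_X / (e_fps lam - 1) - (fps_X / (e_fps (lam / 2) - 1) oo fps_const 2 * fps_X)
    = fps_X * inverse (e_fps lam + 1)"
  (is "?Q - ?W = _")
proof -
  define E where "E = e_fps lam"
  have Q: "?Q * (E - 1) = fps_X"
    unfolding E_def using assms by (intro fps_X_div_mult_cancel) (simp_all add: e_fps_nth)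
  have "fps_X / (e_fps (lam / 2) - 1) * (e_fps (lam / 2) - 1) = fps_X"
    using assms by (intro fps_X_div_mult_cancel) (simp_all add: e_fps_nth)
  from arg_cong[OF this, of "\<lambda>f. f oo (fps_const 2 * fps_X)"]
  have W: "?W * (E ^ 2 - 1) = fps_const 2 * fps_X"
    by (simp add: fps_compose_mult_distrib fps_compose_sub_distrib e_fps_half_compose_double E_def)
  have E1: "(E + 1) $ 0 \<noteq> 0" by (simp add: E_def e_fps_nth)
  have "(?Q - ?W - fps_X * inverse (E + 1)) * ((E - 1) * (E + 1))
      = ?Q * (E - 1) * (E + 1) - ?W * (E ^ 2 - 1) - fps_X * (E - 1) * (inverse (E + 1) * (E + 1))"
    by (simp add: algebra_simps power2_eq_square)
  also have "\<dots> = fps_X * (E + 1) - fps_const 2 * fps_X - fps_X * (E - 1)"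
    by (simp only: Q W inverse_mult_eq_1[OF E1] mult_1_right)
  also have "\<dots> = 0"
    by (simp add: algebra_simps flip: numeral_fps_const)
  finally have "(?Q - ?W - fps_X * inverse (E + 1)) * ((E - 1) * (E + 1)) = 0" .
  moreover have "E - 1 \<noteq> 0" "E + 1 \<noteq> 0"
    using assms E1 by (auto simp: E_def e_fps_nth dest: arg_cong[of _ _ "\<lambda>f. f $ 1"])
  ultimately show ?thesis by (simp add: E_def)
qed

theorem theorem13:
  fixes lam :: real and n :: nat
  assumes "lam \<noteq> 0"
  shows "(\<Sum>k\<le>n. (-1) ^ k / 2 ^ (k + 1) * fact k * S2lam lam n k)
         = 1 / real (n + 1) * (dbern (n + 1) lam - 2 ^ (n + 1) * dbern (n + 1) (lam / 2))"
proof -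
  have "dbern (n + 1) lam - 2 ^ (n + 1) * dbern (n + 1) (lam / 2)
      = fact (n + 1) * (fps_X / (e_fps lam - 1)
          - (fps_X / (e_fps (lam / 2) - 1) oo fps_const 2 * fps_X)) $ (n + 1)"
    by (simp add: dbern_def right_diff_distrib)
  also have "\<dots> = real (n + 1) * (fact n * inverse (e_fps lam + 1) $ n)"
    by (simp add: X_div_e_fps_minus_1_diff[OF assms] del: of_nat_Suc)
  finally have rhs: "dbern (n + 1) lam - 2 ^ (n + 1) * dbern (n + 1) (lam / 2)
      = real (n + 1) * (fact n * inverse (e_fps lam + 1) $ n)" .
  show ?thesis
    unfolding sum_alternating_S2lam[OF assms] rhs by (simp del: of_nat_Suc)
qed

end
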